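(* Let $k$ and $d$ be positive integers. Let $G$ be a simple undirected graph and let $v$ be a vertex of $G$ that has at least $R(k+2,d)$ neighbours which are pairwise non-adjacent in $G$. Suppose $G$ can be represented as the intersection graph of an arrangement $\mathcal{R}$ of axis-aligned hypercubes in $\mathbb{R}^d$, with $f\colon V(G)\to\mathcal{R}$ the corresponding bijection (so that for distinct vertices $u,u'$, $uu'\in E(G)$ if and only if $f(u)\cap f(u')\neq\emptyset$). Then there is a neighbour $w$ of $v$ such that the hypercube $f(w)$ is more than $k$ times smaller than $f(v)$, i.e. $k\cdot s(f(w)) < s(f(v))$, where $s(\cdot)$ denotes the side length of a hypercube.
   Context: $R(k,d)$ denotes the Ramsey number: the smallest integer $N$ such that every colouring of the edges of the complete graph on $N$ vertices with $d$ colours contains a monochromatic clique on $k$ vertices. An axis-aligned hypercube in $\mathbb{R}^d$ is a set of the form $\prod_{c=1}^d [p_c, p_c+s]$ with $s>0$. *)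

theory Defs
  imports "HOL-Analysis.Analysis"
begin

definition ramsey_number :: "nat \<Rightarrow> nat \<Rightarrow> nat" where
  "ramsey_number k d = (LEAST N. \<forall>c :: nat set \<Rightarrow> nat.
      (\<forall>i<N. \<forall>j<N. i \<noteq> j \<longrightarrow> c {i, j} < d) \<longrightarrow>
      (\<exists>S \<subseteq> {..<N}. card S = k \<and>
         (\<exists>col. \<forall>i\<in>S. \<forall>j\<in>S. i \<noteq> j \<longrightarrow> c {i, j} = col)))"

definition axis_hypercube :: "real ^ 'n \<Rightarrow> real \<Rightarrow> (real ^ 'n) set" where
  "axis_hypercube p s = {x. \<forall>c. p $ c \<le> x $ c \<and> x $ c \<le> p $ c + s}"

end

theory Submission
  imports Defs "HOL-Library.Ramsey"
begin

text \<open>Two neighbours of \<open>v\<close> that are non-adjacent have disjoint cubes, so their projections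
  are disjoint intervals along some coordinate. Colouring each pair of independent neighbours by
  such a coordinate, Ramsey's theorem yields \<open>k + 2\<close> of them whose projections onto one common
  coordinate are pairwise disjoint, and all of these intervals meet the projection of \<open>v\<close>'s cube,
  an interval of length \<open>s v\<close>. Apart from the leftmost and the rightmost, the remaining \<open>k\<close> intervals
  lie strictly inside that interval, so their lengths sum to less than \<open>s v\<close> and one of them is
  shorter than \<open>s v / k\<close>.\<close>

lemma ramsey_number_LeastI:
  "\<forall>c :: nat set \<Rightarrow> nat.
      (\<forall>i<ramsey_number k d. \<forall>j<ramsey_number k d. i \<noteq> j \<longrightarrow> c {i, j} < d) \<longrightarrow>
      (\<exists>S \<subseteq> {..<ramsey_number k d}. card S = k \<and>
         (\<exists>col. \<forall>i\<in>S. \<forall>j\<in>S. i \<noteq> j \<longrightarrow> c {i, j} = col))"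
proof -
  obtain N :: nat where N: "partn_lst {..<N} (replicate d k) 2"
    using ramsey_full by blast
  show ?thesis
    unfolding ramsey_number_def
  proof (rule LeastI_ex, rule exI[of _ N], intro allI impI)
    fix c :: "nat set \<Rightarrow> nat"
    assume "\<forall>i<N. \<forall>j<N. i \<noteq> j \<longrightarrow> c {i, j} < d"
    then have "c \<in> [{..<N}]\<^bsup>2\<^esup> \<rightarrow> {..<d}"
      by (auto elim!: nsets2_E)
    then obtain i H where H: "H \<in> [{..<N}]\<^bsup>k\<^esup>" and mono: "c ` [H]\<^bsup>2\<^esup> \<subseteq> {i}"
      using partn_lstE[OF N] by (metis length_replicate nth_replicate)
    have "c {x, y} = i" if "x \<in> H" "y \<in> H" "x \<noteq> y" for x y
      using mono that by (simp add: image_subset_iff)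
    then show "\<exists>S \<subseteq> {..<N}. card S = k \<and> (\<exists>col. \<forall>i\<in>S. \<forall>j\<in>S. i \<noteq> j \<longrightarrow> c {i, j} = col)"
      using H by (auto simp: nsets_def)
  qed
qed

lemma ramsey_number_monochromatic:
  fixes X :: "'a set" and c :: "'a set \<Rightarrow> 'b :: finite"
  assumes "finite X" "ramsey_number k CARD('b) \<le> card X"
  shows "\<exists>S \<subseteq> X. card S = k \<and> (\<exists>col. \<forall>x\<in>S. \<forall>y\<in>S. x \<noteq> y \<longrightarrow> c {x, y} = col)"
proof -
  define N where "N = ramsey_number k CARD('b)"
  obtain Y where Y: "Y \<subseteq> X" "card Y = N"
    using obtain_subset_with_card_n assms(2) unfolding N_def by blast
  then have "finite Y" using assms(1) finite_subset by blast
  then obtain g where g: "bij_betw g {..<N} Y"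
    using ex_bij_betw_nat_finite Y(2) unfolding lessThan_atLeast0 by blast
  obtain e :: "'b \<Rightarrow> nat" where e: "bij_betw e UNIV {..<CARD('b)}"
    using ex_bij_betw_finite_nat[of "UNIV :: 'b set"] by (auto simp: lessThan_atLeast0)
  have "e (c (g ` {i, j})) < CARD('b)" for i j
    using e by (auto simp: bij_betw_def)
  then obtain S col where S: "S \<subseteq> {..<N}" "card S = k"
    and col: "\<forall>i\<in>S. \<forall>j\<in>S. i \<noteq> j \<longrightarrow> e (c (g ` {i, j})) = col"
    using ramsey_number_LeastI[of k "CARD('b)", rule_format, of "\<lambda>A. e (c (g ` A))"]
    unfolding N_def by blast
  have inj: "inj_on g S" using g S(1) by (auto simp: bij_betw_def intro: inj_on_subset)
  have "c {x, y} = inv e col" if xy: "x \<in> g ` S" "y \<in> g ` S" "x \<noteq> y" for x y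
  proof -
    obtain i j where "i \<in> S" "j \<in> S" "x = g i" "y = g j" using xy by blast
    then have "e (c {x, y}) = col" using col xy by auto
    then show ?thesis using e by (metis bij_betw_imp_inj_on inv_f_f)
  qed
  moreover have "g ` S \<subseteq> X" using g S(1) Y(1) by (auto simp: bij_betw_def)
  ultimately show ?thesis using card_image[OF inj] S(2) by blast
qed

lemma ramsey_number_common_witness:
  fixes X :: "'a set" and P :: "'b :: finite \<Rightarrow> 'a \<Rightarrow> 'a \<Rightarrow> bool"
  assumes "finite X" "ramsey_number k CARD('b) \<le> card X"
    and sym: "\<And>c x y. P c x y \<Longrightarrow> P c y x"
    and witness: "\<And>x y. x \<in> X \<Longrightarrow> y \<in> X \<Longrightarrow> x \<noteq> y \<Longrightarrow> \<exists>c. P c x y"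
  shows "\<exists>S \<subseteq> X. card S = k \<and> (\<exists>c. \<forall>x\<in>S. \<forall>y\<in>S. x \<noteq> y \<longrightarrow> P c x y)"
proof -
  define colour where "colour A = (SOME c. \<forall>x\<in>A. \<forall>y\<in>A. x \<noteq> y \<longrightarrow> P c x y)" for A
  have colour: "P (colour {x, y}) x y" if xy: "x \<in> X" "y \<in> X" "x \<noteq> y" for x y
  proof -
    obtain c where "P c x y" using witness xy by blast
    then have "\<forall>a\<in>{x, y}. \<forall>b\<in>{x, y}. a \<noteq> b \<longrightarrow> P c a b" using sym by blast
    then show ?thesis unfolding colour_def by (rule someI2) (use xy in blast)
  qed
  obtain S col where "S \<subseteq> X" "card S = k" "\<forall>x\<in>S. \<forall>y\<in>S. x \<noteq> y \<longrightarrow> colour {x, y} = col"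
    using ramsey_number_monochromatic[OF assms(1,2)] by blast
  then show ?thesis using colour by (metis subsetD)
qed

definition intervals_apart :: "real \<Rightarrow> real \<Rightarrow> real \<Rightarrow> real \<Rightarrow> bool" where
  "intervals_apart a l b m \<longleftrightarrow> a + l < b \<or> b + m < a"

lemma sum_lengths_apart_intervals_less:
  fixes a l :: "'b \<Rightarrow> real"
  assumes "finite T" "T \<noteq> {}"
    and "\<And>t. t \<in> T \<Longrightarrow> A \<le> a t \<and> a t + l t < B"
    and "\<And>t. t \<in> T \<Longrightarrow> 0 \<le> l t"
    and "\<And>t t'. t \<in> T \<Longrightarrow> t' \<in> T \<Longrightarrow> t \<noteq> t' \<Longrightarrow> intervals_apart (a t) (l t) (a t') (l t')"
  shows "(\<Sum>t\<in>T. l t) < B - A"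
  using assms
proof (induction T arbitrary: B rule: finite_ranking_induct[where f = a])
  case empty
  then show ?case by simp
next
  case (insert t0 T)
  consider "t0 \<in> T" | "T = {}" | "t0 \<notin> T" "T \<noteq> {}" by blast
  then show ?case
  proof cases
    case 1
    then show ?thesis using insert by (simp add: insert_absorb)
  next
    case 2
    then show ?thesis using insert.prems(2)[of t0] by simp
  next
    case 3
    have "A \<le> a t \<and> a t + l t < a t0" if t: "t \<in> T" for t
      using insert.prems(2)[of t] insert.prems(3)[of t0] insert.prems(4)[of t t0]
        insert.hyps(2)[OF t] t 3(1)
      by (auto simp: intervals_apart_def)
    then have "(\<Sum>t\<in>T. l t) < a t0 - A"
      using insert.IH[of "a t0"] insert.prems(3,4) 3(2) by auto
    then show ?thesis using insert.prems(2)[of t0] insert.hyps(1) 3(1) by simp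
  qed
qed

lemma apart_intervals_meeting_one_short:
  fixes a l :: "'b \<Rightarrow> real"
  assumes W: "finite W" "card W = k + 2" and "k \<ge> 1"
    and meet: "\<And>t. t \<in> W \<Longrightarrow> a t \<le> A + L \<and> A \<le> a t + l t"
    and nonneg: "\<And>t. t \<in> W \<Longrightarrow> 0 \<le> l t"
    and apart: "\<And>t t'. t \<in> W \<Longrightarrow> t' \<in> W \<Longrightarrow> t \<noteq> t' \<Longrightarrow> intervals_apart (a t) (l t) (a t') (l t')"
  shows "\<exists>t\<in>W. real k * l t < L"
proof (rule ccontr)
  assume "\<not> ?thesis"
  then have long: "\<And>t. t \<in> W \<Longrightarrow> L \<le> real k * l t" by (simp add: not_less)
  have "W \<noteq> {}" using W by auto
  obtain tmin where tmin: "tmin \<in> W" "\<And>t. t \<in> W \<Longrightarrow> a tmin \<le> a t"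
    using arg_min_if_finite[OF W(1) \<open>W \<noteq> {}\<close>, of a] by (meson not_less)
  obtain tmax where tmax: "tmax \<in> W" "\<And>t. t \<in> W \<Longrightarrow> a t \<le> a tmax"
    using arg_min_if_finite[OF W(1) \<open>W \<noteq> {}\<close>, of "\<lambda>t. - a t"] by (meson neg_less_iff_less not_less)
  define M where "M = W - {tmin, tmax}"
  have "card W - card {tmin, tmax} \<le> card M"
    unfolding M_def by (rule diff_card_le_card_Diff) simp
  moreover have "card {tmin, tmax} \<le> 2" by (simp add: card_insert_if)
  ultimately have "k \<le> card M" using W(2) by linarith
  moreover have "finite M" using W(1) by (simp add: M_def)
  ultimately have M: "finite M" "M \<noteq> {}" using \<open>k \<ge> 1\<close> by auto
  have inside: "A \<le> a t \<and> a t + l t < A + L" if t: "t \<in> M" for t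
  proof -
    have t': "t \<in> W" "t \<noteq> tmin" "t \<noteq> tmax" using t by (auto simp: M_def)
    have "a tmin + l tmin < a t" "a t + l t < a tmax"
      using apart[OF tmin(1) t'(1)] apart[OF t'(1) tmax(1)] t'(2,3) tmin(2)[OF t'(1)] tmax(2)[OF t'(1)]
        nonneg[OF t'(1)] nonneg[OF tmin(1)] nonneg[OF tmax(1)] by (auto simp: intervals_apart_def)
    then show ?thesis using meet[OF tmin(1)] meet[OF tmax(1)] by linarith
  qed
  have "(\<Sum>t\<in>M. l t) < L"
    using sum_lengths_apart_intervals_less[OF M inside] nonneg apart by (simp add: M_def)
  moreover have "0 \<le> (\<Sum>t\<in>M. l t)" using nonneg by (intro sum_nonneg) (simp add: M_def)
  ultimately have "real k * L \<le> real (card M) * L"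
    using \<open>k \<le> card M\<close> by (intro mult_right_mono) auto
  also have "\<dots> \<le> real k * (\<Sum>t\<in>M. l t)"
    using long by (simp add: sum_distrib_left M_def flip: sum_constant) (intro sum_mono, simp)
  also have "\<dots> < real k * L"
    using \<open>(\<Sum>t\<in>M. l t) < L\<close> \<open>k \<ge> 1\<close> by simp
  finally show False by simp
qed

lemma axis_hypercube_disjoint_apart:
  fixes p q :: "real ^ 'n"
  assumes "axis_hypercube p s \<inter> axis_hypercube q t = {}" "0 \<le> s" "0 \<le> t"
  shows "\<exists>c. intervals_apart (p $ c) s (q $ c) t"
proof (rule ccontr)
  assume "\<not> ?thesis"
  then have "q $ c \<le> p $ c + s \<and> p $ c \<le> q $ c + t" for c
    by (auto simp: intervals_apart_def not_less)
  then have "(\<chi> c. max (p $ c) (q $ c)) \<in> axis_hypercube p s \<inter> axis_hypercube q t"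
    using assms(2,3) by (auto simp: axis_hypercube_def)
  then show False using assms(1) by blast
qed

lemma axis_hypercube_meet:
  fixes p q :: "real ^ 'n"
  assumes "axis_hypercube p s \<inter> axis_hypercube q t \<noteq> {}"
  shows "q $ c \<le> p $ c + s \<and> p $ c \<le> q $ c + t"
proof -
  obtain x where "x \<in> axis_hypercube p s" "x \<in> axis_hypercube q t" using assms by blast
  then have "p $ c \<le> x $ c" "x $ c \<le> p $ c + s" "q $ c \<le> x $ c" "x $ c \<le> q $ c + t"
    by (auto simp: axis_hypercube_def)
  then show ?thesis by linarith
qed

lemma disjoint_hypercubes_meeting_hypercube_one_small:
  fixes p :: "'a \<Rightarrow> real ^ 'd" and q :: "real ^ 'd"
  assumes I: "finite I" "ramsey_number (k + 2) CARD('d) \<le> card I" and "k \<ge> 1"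
    and pos: "\<And>u. u \<in> I \<Longrightarrow> 0 < s u"
    and disjoint: "\<And>u u'. u \<in> I \<Longrightarrow> u' \<in> I \<Longrightarrow> u \<noteq> u' \<Longrightarrow>
                      axis_hypercube (p u) (s u) \<inter> axis_hypercube (p u') (s u') = {}"
    and meet: "\<And>u. u \<in> I \<Longrightarrow> axis_hypercube q r \<inter> axis_hypercube (p u) (s u) \<noteq> {}"
  shows "\<exists>u\<in>I. real k * s u < r"
proof -
  define apart where "apart c u u' \<longleftrightarrow> intervals_apart (p u $ c) (s u) (p u' $ c) (s u')"
    for c u u'
  have apart_sym: "apart c u u' \<Longrightarrow> apart c u' u" for c u u'
    by (auto simp: apart_def intervals_apart_def)
  have separated: "\<exists>c. apart c u u'" if "u \<in> I" "u' \<in> I" "u \<noteq> u'" for u u'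
    unfolding apart_def using disjoint[OF that] pos that
    by (intro axis_hypercube_disjoint_apart) (auto simp: less_imp_le)
  have "\<exists>W \<subseteq> I. card W = k + 2 \<and> (\<exists>c. \<forall>t\<in>W. \<forall>t'\<in>W. t \<noteq> t' \<longrightarrow> apart c t t')"
    by (rule ramsey_number_common_witness[OF I apart_sym separated])
  then obtain W c where W: "W \<subseteq> I" "card W = k + 2"
    and W_apart: "\<forall>t\<in>W. \<forall>t'\<in>W. t \<noteq> t' \<longrightarrow> apart c t t'"
    by blast
  have "finite W" using finite_subset[OF W(1) I(1)] .
  have "\<exists>u\<in>W. real k * s u < r"
  proof (rule apart_intervals_meeting_one_short[where a = "\<lambda>t. p t $ c" and A = "q $ c"])
    show "finite W" "card W = k + 2" "1 \<le> k" by fact+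
    show "p t $ c \<le> q $ c + r \<and> q $ c \<le> p t $ c + s t" if "t \<in> W" for t
      using axis_hypercube_meet meet W(1) that by blast
    show "0 \<le> s t" if "t \<in> W" for t
      using pos W(1) that by (meson less_imp_le subsetD)
    show "intervals_apart (p t $ c) (s t) (p t' $ c) (s t')" if "t \<in> W" "t' \<in> W" "t \<noteq> t'" for t t'
      using W_apart that unfolding apart_def by blast
  qed
  then show ?thesis using W(1) by blast
qed

theorem lemma5:
  fixes V :: "'a set" and E :: "'a \<Rightarrow> 'a \<Rightarrow> bool"
    and p :: "'a \<Rightarrow> real ^ 'd" and s :: "'a \<Rightarrow> real"
    and f :: "'a \<Rightarrow> (real ^ 'd) set"
    and k :: nat and v :: 'a
  assumes k_pos: "k \<ge> 1"
    and E_sym: "\<And>u u'. E u u' \<Longrightarrow> E u' u"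
    and E_irrefl: "\<And>u. \<not> E u u"
    and E_sub: "\<And>u u'. E u u' \<Longrightarrow> u \<in> V \<and> u' \<in> V"
    and cubes: "\<And>u. u \<in> V \<Longrightarrow> s u > 0 \<and> f u = axis_hypercube (p u) (s u)"
    and f_inj: "inj_on f V"
    and intersect: "\<And>u u'. u \<in> V \<Longrightarrow> u' \<in> V \<Longrightarrow> u \<noteq> u' \<Longrightarrow>
                      (E u u' \<longleftrightarrow> f u \<inter> f u' \<noteq> {})"
    and v_in: "v \<in> V"
    and indep_nbrs: "\<exists>I. finite I \<and> I \<subseteq> {u. E v u} \<and>
                      card I \<ge> ramsey_number (k + 2) CARD('d) \<and>
                      (\<forall>u\<in>I. \<forall>u'\<in>I. \<not> E u u')"
  shows "\<exists>w. E v w \<and> real k * s w < s v"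
proof -
  obtain I where I: "finite I" "ramsey_number (k + 2) CARD('d) \<le> card I"
    and nbr: "\<And>u. u \<in> I \<Longrightarrow> E v u" and indep: "\<And>u u'. u \<in> I \<Longrightarrow> u' \<in> I \<Longrightarrow> \<not> E u u'"
    using indep_nbrs by blast
  have in_V: "u \<in> V" if "u \<in> I" for u
    using E_sub nbr that by blast
  have "\<exists>w\<in>I. real k * s w < s v"
  proof (rule disjoint_hypercubes_meeting_hypercube_one_small[OF I k_pos])
    show "0 < s u" if "u \<in> I" for u
      using cubes[OF in_V] that by blast
    show "axis_hypercube (p u) (s u) \<inter> axis_hypercube (p u') (s u') = {}"
      if "u \<in> I" "u' \<in> I" "u \<noteq> u'" for u u'
      using intersect[OF in_V in_V] indep cubes[OF in_V] that by metis
    show "axis_hypercube (p v) (s v) \<inter> axis_hypercube (p u) (s u) \<noteq> {}" if "u \<in> I" for u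
    proof -
      have "v \<noteq> u" using nbr E_irrefl that by blast
      then show ?thesis
        using intersect[OF v_in in_V] nbr cubes[OF v_in] cubes[OF in_V] that by metis
    qed
  qed
  then show ?thesis using nbr by blast
qed

end
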